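(* Let $P(o,o'\mid b,b')$, with inputs $b,b'\in\{0,1\}$ and outputs $o,o'\in\{\mathrm{accept},\mathrm{reject}\}$, be a conditional probability distribution satisfying no-signalling in both directions, i.e. $\sum_{o'}P(o,o'\mid b,b')$ does not depend on $b'$ and $\sum_{o}P(o,o'\mid b,b')$ does not depend on $b$. Define $p_d := P(\mathrm{accept},\mathrm{accept}\mid b=d,b'=d)$ for $d\in\{0,1\}$ and $\alpha := P(\mathrm{accept},\mathrm{accept}\mid b=0,b'=1)$. Then $p_0+p_1\le 1+\alpha$.
   Context: Interpretation: $b$ and $b'$ are the bits that two non-communicating agents (Bob and Brian) are instructed to open, and $o$, $o'$ are the outcomes of Alice's separate acceptance tests on Bob's and on Brian's opening, respectively. *)

theory Defs
  imports Main "HOL-Analysis.Analysis"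
begin

(* Inputs b, b' are bits (bool: False = 0, True = 1); outputs o, o' are
   bool with True = accept, False = reject.  P o o' b b' = P(o,o' | b,b'). *)

definition cond_prob_dist :: "(bool \<Rightarrow> bool \<Rightarrow> bool \<Rightarrow> bool \<Rightarrow> real) \<Rightarrow> bool" where
  "cond_prob_dist P \<longleftrightarrow>
     (\<forall>o1 o2 b b'. P o1 o2 b b' \<ge> 0) \<and>
     (\<forall>b b'. (\<Sum>o1\<in>UNIV. \<Sum>o2\<in>UNIV. P o1 o2 b b') = 1)"

definition no_signalling :: "(bool \<Rightarrow> bool \<Rightarrow> bool \<Rightarrow> bool \<Rightarrow> real) \<Rightarrow> bool" where
  "no_signalling P \<longleftrightarrow>
     (\<forall>o1 b b1 b2. (\<Sum>o2\<in>UNIV. P o1 o2 b b1) = (\<Sum>o2\<in>UNIV. P o1 o2 b b2)) \<and>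
     (\<forall>o2 b' b1 b2. (\<Sum>o1\<in>UNIV. P o1 o2 b1 b') = (\<Sum>o1\<in>UNIV. P o1 o2 b2 b'))"

end

theory Submission
  imports Defs
begin

text \<open>Each of \<open>p\<^sub>0, p\<^sub>1\<close> is bounded by a one-sided acceptance probability, and by
  no-signalling both of these may be evaluated at the mixed input \<open>(0,1)\<close>.
  There, inclusion-exclusion gives \<open>P(o = acc) + P(o' = acc) = 1 + \<alpha> - P(rej,rej) \<le> 1 + \<alpha>\<close>.\<close>

lemma sum_UNIV_bool: "(\<Sum>x\<in>UNIV. f x) = f True + f False"
  by (simp add: UNIV_bool add.commute)

lemma cond_prob_dist_nonneg: "cond_prob_dist P \<Longrightarrow> P o1 o2 b b' \<ge> 0"
  by (simp add: cond_prob_dist_def)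

lemma cond_prob_dist_total:
  "cond_prob_dist P \<Longrightarrow> P True True b b' + P True False b b' + P False True b b' + P False False b b' = 1"
  by (simp add: cond_prob_dist_def sum_UNIV_bool algebra_simps)

lemma no_signalling_first_marginal:
  "no_signalling P \<Longrightarrow> P o1 True b b1 + P o1 False b b1 = P o1 True b b2 + P o1 False b b2"
  unfolding no_signalling_def sum_UNIV_bool by blast

lemma no_signalling_second_marginal:
  "no_signalling P \<Longrightarrow> P True o2 b1 b' + P False o2 b1 b' = P True o2 b2 b' + P False o2 b2 b'"
  unfolding no_signalling_def sum_UNIV_bool by blast

theorem lemma1:
  fixes P :: "bool \<Rightarrow> bool \<Rightarrow> bool \<Rightarrow> bool \<Rightarrow> real"
  assumes "cond_prob_dist P"
    and "no_signalling P"
  shows "P True True False False + P True True True True \<le> 1 + P True True False True"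
proof -
  have "P True True False False \<le> P True True False True + P True False False True"
    using no_signalling_first_marginal[OF assms(2), of True False False True]
      cond_prob_dist_nonneg[OF assms(1), of True False False False] by linarith
  moreover have "P True True True True \<le> P True True False True + P False True False True"
    using no_signalling_second_marginal[OF assms(2), of True True True False]
      cond_prob_dist_nonneg[OF assms(1), of False True True True] by linarith
  ultimately show ?thesis
    using cond_prob_dist_total[OF assms(1), of False True]
      cond_prob_dist_nonneg[OF assms(1), of False False False True] by linarith
qed

end
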